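(* Let $c\geq 1$ be an odd integer and let $a,b\geq 2$ be coprime integers. Let $\varphi:F(x,y)\to\mathbb{Z}_2=\{1,-1\}$ be the unique nontrivial homomorphism with $\varphi(x)^a\varphi(y)^b=1$ (namely $\varphi(x)=-1,\varphi(y)=1$ if $a$ is even and $b$ odd; $\varphi(x)=1,\varphi(y)=-1$ if $a$ is odd and $b$ even; $\varphi(x)=\varphi(y)=-1$ if $a,b$ are both odd). Then there exists a word $r\in F(x,y)$ with $\delta_x(r)=a$ and $\delta_y(r)=b$ (so that $H^2(K_r;\mathbb{Z})=0$) such that, letting $\beta:\Pi=F(x,y)/N(r)\to\mathbb{Z}_2$ be the homomorphism induced by $\varphi$, one has $H^2(K_r;{}_{\beta}\mathbb{Z})\cong\mathbb{Z}/c\mathbb{Z}$.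
   Context: $F(x,y)$ is the free group on $x,y$; for $r\in F(x,y)$, $\delta_x(r)$ and $\delta_y(r)$ are the exponent sums of $x$ and $y$ in $r$, $N(r)$ is the normal closure of $r$, and $K_r$ is the model two-complex of the presentation $\langle x,y\mid r\rangle$ (one $0$-cell, two $1$-cells, one $2$-cell attached along $r$), with fundamental group $\Pi=F(x,y)/N(r)$. Since $\varphi(r)=\varphi(x)^{\delta_x(r)}\varphi(y)^{\delta_y(r)}=1$, $\varphi$ induces $\beta$ on $\Pi$. $\mathbb{Z}_2$ is identified with $\mathrm{Aut}(\mathbb{Z})$, so $\beta$ is a local integer coefficient system on $K_r$ and $H^2(K_r;{}_{\beta}\mathbb{Z})$ is the corresponding twisted cohomology group. *)

theory Defs
  imports "HOL-Algebra.Algebra"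
begin

datatype gen = Gx | Gy

text \<open>A letter is a generator with a sign (True = g, False = g inverse);
  a word (element of F(x,y), not necessarily reduced) is a list of letters.\<close>
type_synonym letter = "gen \<times> bool"
type_synonym word = "letter list"

definition expsum :: "gen \<Rightarrow> word \<Rightarrow> int" where
  "expsum g w = (\<Sum>l\<leftarrow>w. if fst l = g then (if snd l then 1 else -1) else 0)"

definition letter_val :: "(gen \<Rightarrow> int) \<Rightarrow> letter \<Rightarrow> int" where
  "letter_val \<phi> l = (if snd l then \<phi> (fst l) else \<phi> (fst l))"

text \<open>(In Z_2 = {1,-1} every element is its own inverse, so g and g^-1 have the same value.)\<close>

fun word_val :: "(gen \<Rightarrow> int) \<Rightarrow> word \<Rightarrow> int" where
  "word_val \<phi> [] = 1"
| "word_val \<phi> (l # w) = letter_val \<phi> l * word_val \<phi> w"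

text \<open>Fox derivative d/dg of a word, pushed forward to Z via \<phi>:
  d(uv) = du + u dv, d(g) = 1, d(g^-1) = -g^-1.\<close>
fun fox_phi :: "(gen \<Rightarrow> int) \<Rightarrow> gen \<Rightarrow> word \<Rightarrow> int" where
  "fox_phi \<phi> g [] = 0"
| "fox_phi \<phi> g (l # w) =
     (if fst l = g then (if snd l then 1 else - letter_val \<phi> l) else 0)
     + letter_val \<phi> l * fox_phi \<phi> g w"

text \<open>Twisted cellular cochain complex of the model 2-complex K_r:
  C^1 = Z^{x,y}, C^2 = Z, coboundary f \<mapsto> f(x) d_x r + f(y) d_y r.
  H^2(K_r; \<beta>Z) = C^2 / image of the coboundary (there are no 3-cells).\<close>
definition coboundary_image :: "(gen \<Rightarrow> int) \<Rightarrow> word \<Rightarrow> int set" where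
  "coboundary_image \<phi> r = {u * fox_phi \<phi> Gx r + v * fox_phi \<phi> Gy r | u v. True}"

definition twisted_H2 :: "(gen \<Rightarrow> int) \<Rightarrow> word \<Rightarrow> int set monoid" where
  "twisted_H2 \<phi> r = integer_group Mod coboundary_image \<phi> r"

definition Zmod :: "int \<Rightarrow> int set monoid" where
  "Zmod c = integer_group Mod {k * c | k. True}"

end

theory Submission
  imports Defs
begin

text \<open>The twisted coboundary C^1 \<rightarrow> C^2 = \<int> has image the ideal generated by the two
  \<phi>-images of the Fox derivatives of r, so H^2(K_r; \<beta>\<int>) is \<int> modulo their gcd, and it
  suffices to find r with exponent sums a, b whose twisted Fox derivatives have gcd c.
  Since a and b are coprime they are not both even, which leaves two kinds of \<phi>.
  If \<phi> g = -1 and \<phi> h = 1, then r = h^p g h^q g^(m-1) has g-derivative 0 and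
  h-derivative p - q, and p + q = n, p - q = c is solvable because n and c are both odd.
  If \<phi> g = \<phi> h = -1, then r = (gh)^c g^(m-c) h^(n-c) has derivatives c and -c.\<close>

lemma expsum_Nil [simp]: "expsum g [] = 0"
  by (simp add: expsum_def)

lemma expsum_Cons [simp]:
  "expsum g (l # w) = (if fst l = g then (if snd l then 1 else -1) else 0) + expsum g w"
  by (simp add: expsum_def)

lemma expsum_append [simp]: "expsum g (u @ w) = expsum g u + expsum g w"
  by (simp add: expsum_def)

lemma word_val_append [simp]: "word_val \<phi> (u @ w) = word_val \<phi> u * word_val \<phi> w"
  by (induction u) auto

lemma fox_phi_append: "fox_phi \<phi> g (u @ w) = fox_phi \<phi> g u + word_val \<phi> u * fox_phi \<phi> g w"
  by (induction u) (auto simp: algebra_simps)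

lemma twisted_H2_eq_Zmod_gcd:
  "twisted_H2 \<phi> r = Zmod (gcd (fox_phi \<phi> Gx r) (fox_phi \<phi> Gy r))"
proof -
  define p q where "p = fox_phi \<phi> Gx r" and "q = fox_phi \<phi> Gy r"
  have "{u * p + v * q | u v. True} = {k * gcd p q | k. True}"
  proof (intro subset_antisym subsetI)
    fix z assume "z \<in> {u * p + v * q | u v. True}"
    then have "gcd p q dvd z" by auto
    then show "z \<in> {k * gcd p q | k. True}" by (auto elim!: dvdE simp: mult.commute)
  next
    fix z assume "z \<in> {k * gcd p q | k. True}"
    then obtain k where z: "z = k * gcd p q" by blast
    obtain u v where uv: "u * p + v * q = gcd p q" using bezout_int by blast
    have "z = (k * u) * p + (k * v) * q" by (simp add: z algebra_simps flip: uv)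
    then show "z \<in> {u * p + v * q | u v. True}" by blast
  qed
  then show ?thesis
    by (simp add: twisted_H2_def Zmod_def coboundary_image_def p_def q_def)
qed

definition gen_pow :: "gen \<Rightarrow> int \<Rightarrow> word" where
  "gen_pow g n =
    (if n \<ge> 0 then replicate (nat n) (g, True) else replicate (nat (-n)) (g, False))"

lemma
  shows expsum_replicate:
      "expsum g (replicate k (h, s)) = (if g = h then (if s then int k else - int k) else 0)"
    and word_val_replicate: "word_val \<phi> (replicate k (h, s)) = \<phi> h ^ k"
    and fox_phi_replicate_other: "g \<noteq> h \<Longrightarrow> fox_phi \<phi> g (replicate k (h, s)) = 0"
    and fox_phi_replicate_trivial:
      "\<phi> h = 1 \<Longrightarrow> fox_phi \<phi> h (replicate k (h, s)) = (if s then int k else - int k)"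
    and fox_phi_replicate_sign:
      "\<phi> h = -1 \<Longrightarrow> fox_phi \<phi> h (replicate k (h, s)) = (if even k then 0 else 1)"
  by (induction k) (auto simp: letter_val_def)

lemma expsum_gen_pow [simp]: "expsum g (gen_pow h n) = (if g = h then n else 0)"
  by (simp add: gen_pow_def expsum_replicate)

lemma word_val_gen_pow:
  "\<phi> h \<in> {1, -1} \<Longrightarrow> word_val \<phi> (gen_pow h n) = (if even n then 1 else \<phi> h)"
  by (auto simp: gen_pow_def word_val_replicate even_nat_iff)

lemma fox_phi_gen_pow_other: "g \<noteq> h \<Longrightarrow> fox_phi \<phi> g (gen_pow h n) = 0"
  by (simp add: gen_pow_def fox_phi_replicate_other)

lemma fox_phi_gen_pow_trivial: "\<phi> h = 1 \<Longrightarrow> fox_phi \<phi> h (gen_pow h n) = n"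
  by (simp add: gen_pow_def fox_phi_replicate_trivial)

lemma fox_phi_gen_pow_sign:
  "\<phi> h = -1 \<Longrightarrow> fox_phi \<phi> h (gen_pow h n) = (if even n then 0 else 1)"
  by (simp add: gen_pow_def fox_phi_replicate_sign even_nat_iff)

lemma exists_word_nontrivial_on_one:
  assumes "g \<noteq> h" "\<phi> g = -1" "\<phi> h = 1" "even m" "odd n" "odd c"
  shows "\<exists>r. expsum g r = m \<and> expsum h r = n
    \<and> fox_phi \<phi> g r = 0 \<and> fox_phi \<phi> h r = c"
proof -
  obtain p q where pq: "p + q = n" "p - q = c"
  proof
    show "(n + c) div 2 + (n - c) div 2 = n" "(n + c) div 2 - (n - c) div 2 = c"
      using \<open>odd n\<close> \<open>odd c\<close> by (auto elim!: oddE)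
  qed
  define r where "r = gen_pow h p @ gen_pow g 1 @ gen_pow h q @ gen_pow g (m - 1)"
  have "expsum g r = m" "expsum h r = n"
    using \<open>g \<noteq> h\<close> pq by (auto simp: r_def)
  moreover have "fox_phi \<phi> g r = 0"
    using assms by (simp add: r_def fox_phi_append fox_phi_gen_pow_other fox_phi_gen_pow_sign
        word_val_gen_pow)
  moreover have "fox_phi \<phi> h r = c"
    using assms pq by (simp add: r_def fox_phi_append fox_phi_gen_pow_other
        fox_phi_gen_pow_trivial word_val_gen_pow)
  ultimately show ?thesis by blast
qed

lemma exists_word_nontrivial_on_both:
  assumes "g \<noteq> h" "\<phi> g = -1" "\<phi> h = -1" "odd m" "odd n" "odd c" "c \<ge> 0"
  shows "\<exists>r. expsum g r = m \<and> expsum h r = n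
    \<and> fox_phi \<phi> g r = c \<and> fox_phi \<phi> h r = - c"
proof -
  define gh_pow where "gh_pow k = concat (replicate k [(g, True), (h, True)])" for k
  have gh_pow: "expsum g (gh_pow k) = int k" "expsum h (gh_pow k) = int k"
    "word_val \<phi> (gh_pow k) = 1" "fox_phi \<phi> g (gh_pow k) = int k"
    "fox_phi \<phi> h (gh_pow k) = - int k" for k
    using assms(1-3) by (induction k) (auto simp: gh_pow_def fox_phi_append letter_val_def)
  define r where "r = gh_pow (nat c) @ gen_pow g (m - c) @ gen_pow h (n - c)"
  have "even (m - c)" "even (n - c)"
    using assms(4-6) by auto
  with assms have "expsum g r = m \<and> expsum h r = n
      \<and> fox_phi \<phi> g r = c \<and> fox_phi \<phi> h r = - c"
    by (simp add: r_def gh_pow fox_phi_append fox_phi_gen_pow_other fox_phi_gen_pow_sign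
        word_val_gen_pow)
  then show ?thesis by blast
qed

lemma sign_character_cases:
  fixes a b :: int and \<phi> :: "gen \<Rightarrow> int"
  assumes "\<forall>g. \<phi> g \<in> {1, -1}" "\<exists>g. \<phi> g \<noteq> 1" "\<phi> Gx ^ nat a * \<phi> Gy ^ nat b = 1"
    and "a \<ge> 0" "b \<ge> 0" "odd a \<or> odd b"
  obtains (nontrivial_on_x) "even a" "odd b" "\<phi> Gx = -1" "\<phi> Gy = 1"
  | (nontrivial_on_y) "odd a" "even b" "\<phi> Gx = 1" "\<phi> Gy = -1"
  | (nontrivial_on_both) "odd a" "odd b" "\<phi> Gx = -1" "\<phi> Gy = -1"
proof -
  have signs: "\<phi> Gx \<in> {1, -1}" "\<phi> Gy \<in> {1, -1}" "\<phi> Gx \<noteq> 1 \<or> \<phi> Gy \<noteq> 1"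
    using assms(1,2) gen.exhaust by metis+
  have "\<phi> Gx ^ nat a = (if even a then 1 else \<phi> Gx)"
    and "\<phi> Gy ^ nat b = (if even b then 1 else \<phi> Gy)"
    using assms(4,5) signs(1,2) by (auto simp: even_nat_iff)
  with assms(3) have "(if even a then 1 else \<phi> Gx) * (if even b then 1 else \<phi> Gy) = 1"
    by simp
  with that signs assms(6) show thesis
    by (cases "even a"; cases "even b") auto
qed

theorem proposition6p3:
  fixes a b c :: int and \<phi> :: "gen \<Rightarrow> int"
  assumes "c \<ge> 1" and "odd c"
    and "a \<ge> 2" and "b \<ge> 2" and "coprime a b"
    and "\<forall>g. \<phi> g \<in> {1, -1}"
    and "\<exists>g. \<phi> g \<noteq> 1"
    and "\<phi> Gx ^ nat a * \<phi> Gy ^ nat b = 1"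
  shows "\<exists>r :: word. expsum Gx r = a \<and> expsum Gy r = b
           \<and> twisted_H2 \<phi> r \<cong> Zmod c"
proof -
  have not_both_even: "odd a \<or> odd b"
    using \<open>coprime a b\<close> by (metis coprime_common_divisor dvd_refl odd_one)
  have a_nonneg: "a \<ge> 0" and b_nonneg: "b \<ge> 0"
    using \<open>a \<ge> 2\<close> \<open>b \<ge> 2\<close> by simp_all
  have "\<exists>r. expsum Gx r = a \<and> expsum Gy r = b
      \<and> gcd (fox_phi \<phi> Gx r) (fox_phi \<phi> Gy r) = c"
    using assms(6-8) a_nonneg b_nonneg not_both_even
  proof (cases rule: sign_character_cases)
    case nontrivial_on_x
    then show ?thesis
      using exists_word_nontrivial_on_one[of Gx Gy \<phi> a b c] assms(1,2) by fastforce
  next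
    case nontrivial_on_y
    then show ?thesis
      using exists_word_nontrivial_on_one[of Gy Gx \<phi> b a c] assms(1,2) by fastforce
  next
    case nontrivial_on_both
    then show ?thesis
      using exists_word_nontrivial_on_both[of Gx Gy \<phi> a b c] assms(1,2) by fastforce
  qed
  then show ?thesis
    by (auto simp: twisted_H2_eq_Zmod_gcd)
qed

end
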